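(* Consider the map $f_{\mathrm{IbM}}(X)=\operatorname{diag}(|X|\mathbf{1}_n)^{-1}XX$ (the system $X(t+1)=f_{\mathrm{IbM}}(X(t))$) on the domain $\mathcal{S}^{+}_{\mathrm{rs\text{-}symm}}$. Define $Q_{\mathrm{IbM}}$ as the set of matrices $PYP^{\top}\in\mathcal{S}^{+}_{\mathrm{rs\text{-}symm}}$ where $P$ is an $n\times n$ permutation matrix and $Y$ is block diagonal with each diagonal block of the form $\operatorname{sign}(w)w^{\top}$, $w\in\mathbb{R}^m$, $|w|\succ\mathbf{0}_m$, $m\le n$ (block sizes summing to $n$). Then: (i) $Q_{\mathrm{IbM}}$ is the set of all fixed points of $f_{\mathrm{IbM}}$ in $\mathcal{S}^{+}_{\mathrm{rs\text{-}symm}}$; (ii) for every $X\in Q_{\mathrm{IbM}}$, $G(X)$ is composed of isolated complete subgraphs that satisfy social balance, i.e., there is a partition of $\{1,\dots,n\}$ into sets $V_1,\dots,V_K$ such that $X_{ij}=0$ whenever $i,j$ lie in different sets, and for each $k$ the principal submatrix of $X$ indexed by $V_k$ has all entries non-zero and its graph satisfies social balance.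
   Context: $|X|$ is entry-wise absolute value, $\mathbf{1}_n$ the all-ones vector, $\operatorname{sign}$ entry-wise sign, $\succ$ entry-wise strict inequality. $\mathcal{S}^{+}_{\mathrm{rs\text{-}symm}}=\{X\in\mathbb{R}^{n\times n}:\operatorname{sign}(X)=\operatorname{sign}(X)^{\top},\ X_{ii}>0\ \forall i,\ \exists\gamma\succ\mathbf{0}_n\text{ with }\operatorname{diag}(\gamma)X=(\operatorname{diag}(\gamma)X)^{\top}\}$. $G(Z)$ is the weighted digraph with adjacency matrix $Z$; it satisfies social balance if $Z_{ii}>0$ for all $i$ and $\operatorname{sign}(Z_{ij})\operatorname{sign}(Z_{jk})\operatorname{sign}(Z_{ki})=1$ for all $i,j,k$. *)

theory Defs
  imports "Jordan_Normal_Form.Matrix" "Jordan_Normal_Form.DL_Submatrix"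
    "HOL-Library.Disjoint_Sets" "HOL-Combinatorics.Permutations"
begin

definition abs_mat :: "real mat \<Rightarrow> real mat" where
  "abs_mat X = map_mat abs X"

definition sign_mat :: "real mat \<Rightarrow> real mat" where
  "sign_mat X = map_mat sgn X"

definition diag_of_vec :: "real vec \<Rightarrow> real mat" where
  "diag_of_vec v = mat_diag (dim_vec v) (\<lambda>i. v $ i)"

text \<open>f_IbM(X) = diag(|X| 1_n)^{-1} X X ; the inverse of a diagonal matrix
  is the diagonal matrix of reciprocals.\<close>
definition f_IbM :: "nat \<Rightarrow> real mat \<Rightarrow> real mat" where
  "f_IbM n X = diag_of_vec (map_vec inverse (abs_mat X *\<^sub>v (vec n (\<lambda>_. 1)))) * X * X"

definition S_rs_symm :: "nat \<Rightarrow> real mat set" where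
  "S_rs_symm n = {X \<in> carrier_mat n n.
     sign_mat X = transpose_mat (sign_mat X) \<and>
     (\<forall>i<n. X $$ (i,i) > 0) \<and>
     (\<exists>\<gamma>. dim_vec \<gamma> = n \<and> (\<forall>i<n. \<gamma> $ i > 0) \<and>
          diag_of_vec \<gamma> * X = transpose_mat (diag_of_vec \<gamma> * X))}"

definition perm_matrix :: "nat \<Rightarrow> (nat \<Rightarrow> nat) \<Rightarrow> real mat" where
  "perm_matrix n p = mat n n (\<lambda>(i,j). if p i = j then 1 else 0)"

definition sign_outer :: "real vec \<Rightarrow> real mat" where
  "sign_outer w = mat (dim_vec w) (dim_vec w) (\<lambda>(i,j). sgn (w $ i) * w $ j)"

definition Q_IbM :: "nat \<Rightarrow> real mat set" where
  "Q_IbM n = {X. X \<in> S_rs_symm n \<and>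
     (\<exists>p ws. p permutes {..<n} \<and>
        (\<forall>w\<in>set ws. dim_vec w \<le> n \<and> (\<forall>i<dim_vec w. \<bar>w $ i\<bar> > 0)) \<and>
        sum_list (map dim_vec ws) = n \<and>
        X = perm_matrix n p * diag_block_mat (map sign_outer ws) * transpose_mat (perm_matrix n p))}"

definition social_balance :: "real mat \<Rightarrow> bool" where
  "social_balance Z \<longleftrightarrow> (let m = dim_row Z in
     (\<forall>i<m. Z $$ (i,i) > 0) \<and>
     (\<forall>i<m. \<forall>j<m. \<forall>k<m. sgn (Z $$ (i,j)) * sgn (Z $$ (j,k)) * sgn (Z $$ (k,i)) = 1))"

end

theory Submission
  imports Defs
begin

text \<open>
  Write \<open>d\<^sub>i = \<Sum>\<^sub>k |X\<^sub>i\<^sub>k|\<close>. A fixed point satisfies \<open>d\<^sub>i X\<^sub>i\<^sub>j = \<Sum>\<^sub>k X\<^sub>i\<^sub>k X\<^sub>k\<^sub>j\<close>, so for each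
  column \<open>j\<close> the function \<open>c\<^sub>k = |X\<^sub>k\<^sub>j|\<close> is subharmonic for the weights \<open>|X\<^sub>i\<^sub>k|\<close>.
  The weights become symmetric after multiplication by \<open>\<gamma>\<close>, and a nonnegative subharmonic
  function for symmetric weights is constant along every edge (its Dirichlet energy is
  both nonnegative and nonpositive). Hence \<open>|X\<^sub>i\<^sub>j| = |X\<^sub>k\<^sub>j|\<close> whenever \<open>X\<^sub>i\<^sub>k \<noteq> 0\<close>, the
  triangle inequality in the fixed point equation is an equality, and the signs of
  \<open>X\<^sub>i\<^sub>k X\<^sub>k\<^sub>j\<close> and \<open>X\<^sub>i\<^sub>j\<close> agree. So "\<open>X\<^sub>i\<^sub>j \<noteq> 0\<close>" is an equivalence relation and on each
  class \<open>X\<^sub>i\<^sub>j = sgn(w\<^sub>i) w\<^sub>j\<close>: up to a permutation \<open>X\<close> is block diagonal with blocks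
  \<open>sign(w) w\<^sup>T\<close>. Conversely such matrices are fixed points, and every block is a
  complete graph whose sign pattern \<open>sgn(w\<^sub>i) sgn(w\<^sub>j)\<close> is balanced.
\<close>

lemma sgn_eq_sgn_sum_if_sum_abs_eq:
  fixes a :: "'a \<Rightarrow> real"
  assumes "finite A" "k \<in> A" "a k \<noteq> 0" "(\<Sum>i\<in>A. \<bar>a i\<bar>) = \<bar>\<Sum>i\<in>A. a i\<bar>"
  shows "sgn (a k) = sgn (\<Sum>i\<in>A. a i)"
proof (cases "(\<Sum>i\<in>A. a i) \<ge> 0")
  case True
  have "(\<Sum>i\<in>A. \<bar>a i\<bar> - a i) = 0" using assms(4) True by (simp add: sum_subtractf)
  then have "\<forall>i\<in>A. \<bar>a i\<bar> - a i = 0" using assms(1) by (subst sum_nonneg_eq_0_iff[symmetric]) auto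
  then have pos: "a k > 0" using assms(2,3) by force
  have "\<bar>a k\<bar> \<le> (\<Sum>i\<in>A. \<bar>a i\<bar>)" using assms(1,2) by (intro member_le_sum) auto
  then have "(\<Sum>i\<in>A. a i) > 0" using assms(4) True pos by auto
  then show ?thesis using pos by simp
next
  case False
  have "(\<Sum>i\<in>A. \<bar>a i\<bar> + a i) = 0" using assms(4) False by (simp add: sum.distrib)
  then have "\<forall>i\<in>A. \<bar>a i\<bar> + a i = 0" using assms(1) by (subst sum_nonneg_eq_0_iff[symmetric]) auto
  then have "a k < 0" using assms(2,3) by force
  then show ?thesis using False by simp
qed

lemma dirichlet_energy_eq:
  fixes s :: "'a \<Rightarrow> 'a \<Rightarrow> real"
  assumes sym: "\<And>i k. i \<in> A \<Longrightarrow> k \<in> A \<Longrightarrow> s i k = s k i"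
  shows "(\<Sum>i\<in>A. \<Sum>k\<in>A. s i k * (c i - c k)\<^sup>2)
    = 2 * (\<Sum>i\<in>A. c i * (c i * (\<Sum>k\<in>A. s i k) - (\<Sum>k\<in>A. s i k * c k)))"
proof -
  have swap: "(\<Sum>i\<in>A. \<Sum>k\<in>A. s i k * (c k)\<^sup>2) = (\<Sum>i\<in>A. \<Sum>k\<in>A. s i k * (c i)\<^sup>2)"
  proof -
    have "(\<Sum>i\<in>A. \<Sum>k\<in>A. s i k * (c k)\<^sup>2) = (\<Sum>k\<in>A. \<Sum>i\<in>A. s i k * (c k)\<^sup>2)"
      by (rule sum.swap)
    also have "\<dots> = (\<Sum>k\<in>A. \<Sum>i\<in>A. s k i * (c k)\<^sup>2)"
      using sym by (intro sum.cong) auto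
    finally show ?thesis .
  qed
  have "(\<Sum>i\<in>A. \<Sum>k\<in>A. s i k * (c i - c k)\<^sup>2)
      = (\<Sum>i\<in>A. \<Sum>k\<in>A. s i k * (c i)\<^sup>2) + (\<Sum>i\<in>A. \<Sum>k\<in>A. s i k * (c k)\<^sup>2)
        - 2 * (\<Sum>i\<in>A. \<Sum>k\<in>A. s i k * (c i * c k))"
    by (simp add: power2_diff algebra_simps sum.distrib sum_subtractf sum_distrib_left)
  also have "\<dots> = 2 * (\<Sum>i\<in>A. c i * (c i * (\<Sum>k\<in>A. s i k) - (\<Sum>k\<in>A. s i k * c k)))"
    unfolding swap
    by (simp add: algebra_simps power2_eq_square sum_subtractf sum_distrib_left sum_distrib_right)
  finally show ?thesis .
qed

lemma subharmonic_const_on_edges: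
  fixes s :: "'a \<Rightarrow> 'a \<Rightarrow> real"
  assumes "finite A"
    and sym: "\<And>i k. i \<in> A \<Longrightarrow> k \<in> A \<Longrightarrow> s i k = s k i"
    and s_nonneg: "\<And>i k. i \<in> A \<Longrightarrow> k \<in> A \<Longrightarrow> s i k \<ge> 0"
    and c_nonneg: "\<And>i. i \<in> A \<Longrightarrow> c i \<ge> 0"
    and subharmonic: "\<And>i. i \<in> A \<Longrightarrow> c i * (\<Sum>k\<in>A. s i k) \<le> (\<Sum>k\<in>A. s i k * c k)"
    and "i \<in> A" "k \<in> A" "s i k \<noteq> 0"
  shows "c i = c k"
proof -
  define E where "E i = (\<Sum>k\<in>A. s i k * (c i - c k)\<^sup>2)" for i
  have E_nonneg: "E i \<ge> 0" if "i \<in> A" for i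
    unfolding E_def using s_nonneg that by (intro sum_nonneg) auto
  have "(\<Sum>i\<in>A. E i) = 2 * (\<Sum>i\<in>A. c i * (c i * (\<Sum>k\<in>A. s i k) - (\<Sum>k\<in>A. s i k * c k)))"
    unfolding E_def by (rule dirichlet_energy_eq[OF sym])
  also have "\<dots> \<le> 0"
    using c_nonneg subharmonic by (auto intro!: sum_nonpos mult_nonneg_nonpos)
  finally have "(\<Sum>i\<in>A. E i) = 0"
    using E_nonneg by (meson antisym sum_nonneg)
  then have "\<forall>i\<in>A. E i = 0"
    using E_nonneg \<open>finite A\<close> by (subst sum_nonneg_eq_0_iff[symmetric]) auto
  then have "\<forall>k'\<in>A. s i k' * (c i - c k')\<^sup>2 = 0"
    using \<open>i \<in> A\<close> \<open>finite A\<close> s_nonneg unfolding E_def by (subst sum_nonneg_eq_0_iff[symmetric]) auto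
  then show ?thesis using \<open>k \<in> A\<close> \<open>s i k \<noteq> 0\<close> by auto
qed

locale ibm_fixed_point =
  fixes n :: nat and x :: "nat \<Rightarrow> nat \<Rightarrow> real" and \<gamma> :: "nat \<Rightarrow> real"
  assumes weight_pos: "i < n \<Longrightarrow> \<gamma> i > 0"
    and weighted_sym: "i < n \<Longrightarrow> k < n \<Longrightarrow> \<gamma> i * x i k = \<gamma> k * x k i"
    and diag_pos: "i < n \<Longrightarrow> x i i > 0"
    and fixed_point_eq: "i < n \<Longrightarrow> j < n \<Longrightarrow> (\<Sum>k<n. \<bar>x i k\<bar>) * x i j = (\<Sum>k<n. x i k * x k j)"
begin

lemma row_abs_sum_pos: "i < n \<Longrightarrow> (\<Sum>k<n. \<bar>x i k\<bar>) > 0"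
  using member_le_sum[of i "{..<n}" "\<lambda>k. \<bar>x i k\<bar>"] diag_pos[of i] by auto

lemma sgn_sym:
  assumes "i < n" "k < n"
  shows "sgn (x i k) = sgn (x k i)"
proof -
  have "sgn (\<gamma> i * x i k) = sgn (\<gamma> k * x k i)" using weighted_sym assms by simp
  then show ?thesis using weight_pos assms by (simp add: sgn_mult)
qed

lemma nonzero_sym: "i < n \<Longrightarrow> k < n \<Longrightarrow> x i k \<noteq> 0 \<Longrightarrow> x k i \<noteq> 0"
  using sgn_sym by (metis sgn_0_0 sgn_zero_iff)

lemma abs_eq_on_edges:
  assumes "i < n" "j < n" "k < n" "x i k \<noteq> 0"
  shows "\<bar>x i j\<bar> = \<bar>x k j\<bar>"
proof (rule subharmonic_const_on_edges[where A = "{..<n}" and s = "\<lambda>i k. \<gamma> i * \<bar>x i k\<bar>"])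
  fix i' k' assume i': "i' \<in> {..<n}" and k': "k' \<in> {..<n}"
  have "\<bar>\<gamma> i' * x i' k'\<bar> = \<bar>\<gamma> k' * x k' i'\<bar>" using weighted_sym i' k' by simp
  moreover have "\<gamma> i' > 0" "\<gamma> k' > 0" using weight_pos i' k' by auto
  ultimately show "\<gamma> i' * \<bar>x i' k'\<bar> = \<gamma> k' * \<bar>x k' i'\<bar>" "\<gamma> i' * \<bar>x i' k'\<bar> \<ge> 0"
    by (simp_all add: abs_mult)
next
  fix i' assume i': "i' \<in> {..<n}"
  have "\<bar>x i' j\<bar> * (\<Sum>k<n. \<bar>x i' k\<bar>) = \<bar>(\<Sum>k<n. \<bar>x i' k\<bar>) * x i' j\<bar>"
    by (simp add: abs_mult sum_nonneg)
  also have "\<dots> = \<bar>\<Sum>k<n. x i' k * x k j\<bar>"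
    using fixed_point_eq[of i' j] i' \<open>j < n\<close> by simp
  also have "\<dots> \<le> (\<Sum>k<n. \<bar>x i' k\<bar> * \<bar>x k j\<bar>)"
    using sum_abs[of "\<lambda>k. x i' k * x k j" "{..<n}"] by (simp add: abs_mult)
  finally have "\<gamma> i' * (\<bar>x i' j\<bar> * (\<Sum>k<n. \<bar>x i' k\<bar>)) \<le> \<gamma> i' * (\<Sum>k<n. \<bar>x i' k\<bar> * \<bar>x k j\<bar>)"
    using weight_pos[of i'] i' by (intro mult_left_mono) auto
  then show "\<bar>x i' j\<bar> * (\<Sum>k\<in>{..<n}. \<gamma> i' * \<bar>x i' k\<bar>) \<le> (\<Sum>k\<in>{..<n}. \<gamma> i' * \<bar>x i' k\<bar> * \<bar>x k j\<bar>)"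
    by (simp add: sum_distrib_left algebra_simps)
qed (use assms weight_pos[of i] in auto)

lemma nonzero_trans: "i < n \<Longrightarrow> j < n \<Longrightarrow> k < n \<Longrightarrow> x i k \<noteq> 0 \<Longrightarrow> x k j \<noteq> 0 \<Longrightarrow> x i j \<noteq> 0"
  using abs_eq_on_edges[of i j k] by auto

lemma sgn_path:
  assumes "i < n" "j < n" "k < n" "x i k \<noteq> 0" "x k j \<noteq> 0"
  shows "sgn (x i j) = sgn (x i k) * sgn (x k j)"
proof -
  have "\<bar>x i l * x l j\<bar> = \<bar>x i l\<bar> * \<bar>x i j\<bar>" if "l < n" for l
    using abs_eq_on_edges[of i j l] assms that by (cases "x i l = 0") (auto simp: abs_mult)
  then have "(\<Sum>l<n. \<bar>x i l * x l j\<bar>) = (\<Sum>l<n. \<bar>x i l\<bar> * \<bar>x i j\<bar>)" by simp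
  also have "\<dots> = (\<Sum>l<n. \<bar>x i l\<bar>) * \<bar>x i j\<bar>"
    by (simp add: sum_distrib_right)
  also have "\<dots> = \<bar>(\<Sum>l<n. \<bar>x i l\<bar>) * x i j\<bar>"
    by (simp add: abs_mult sum_nonneg)
  also have "\<dots> = \<bar>\<Sum>l<n. x i l * x l j\<bar>" using fixed_point_eq assms by simp
  finally have "sgn (x i k * x k j) = sgn (\<Sum>l<n. x i l * x l j)"
    using assms by (intro sgn_eq_sgn_sum_if_sum_abs_eq) auto
  also have "\<dots> = sgn ((\<Sum>l<n. \<bar>x i l\<bar>) * x i j)" using fixed_point_eq assms by simp
  also have "\<dots> = sgn (x i j)" using row_abs_sum_pos[of i] assms by (simp add: sgn_mult)
  finally show ?thesis by (simp add: sgn_mult)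
qed

definition rep :: "nat \<Rightarrow> nat" where
  "rep i = (LEAST k. k < n \<and> x i k \<noteq> 0)"

lemma rep_less_nonzero:
  assumes "i < n"
  shows "rep i < n \<and> x i (rep i) \<noteq> 0"
proof -
  have "i < n \<and> x i i \<noteq> 0" using diag_pos[OF assms] assms by simp
  then show ?thesis unfolding rep_def by (rule LeastI)
qed

lemma rep_eq_iff:
  assumes ij: "i < n" "j < n"
  shows "rep i = rep j \<longleftrightarrow> x i j \<noteq> 0"
proof
  assume "rep i = rep j"
  then have "x i (rep j) \<noteq> 0" "x (rep j) j \<noteq> 0" "rep j < n"
    using rep_less_nonzero[OF ij(1)] rep_less_nonzero[OF ij(2)] nonzero_sym[of j "rep j"] ij(2) by auto
  then show "x i j \<noteq> 0" using nonzero_trans ij by blast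
next
  assume "x i j \<noteq> 0"
  then have "x j i \<noteq> 0" using nonzero_sym ij by blast
  have "(\<lambda>k. k < n \<and> x i k \<noteq> 0) = (\<lambda>k. k < n \<and> x j k \<noteq> 0)"
  proof (intro ext iffI)
    fix k assume "k < n \<and> x i k \<noteq> 0"
    then show "k < n \<and> x j k \<noteq> 0" using nonzero_trans[of j k i] \<open>x j i \<noteq> 0\<close> ij by blast
  next
    fix k assume "k < n \<and> x j k \<noteq> 0"
    then show "k < n \<and> x i k \<noteq> 0" using nonzero_trans[of i k j] \<open>x i j \<noteq> 0\<close> ij by blast
  qed
  then show "rep i = rep j" unfolding rep_def by simp
qed

lemma signed_block_structure:
  "\<exists>(b :: nat \<Rightarrow> nat) W. (\<forall>i<n. W i \<noteq> 0) \<and>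
     (\<forall>i<n. \<forall>j<n. x i j = (if b i = b j then sgn (W i) * W j else 0))"
proof -
  define W where "W j = sgn (x j (rep j)) * x j j" for j
  have W_nonzero: "W i \<noteq> 0" if "i < n" for i
    using rep_less_nonzero[OF that] diag_pos[OF that] unfolding W_def by (simp add: sgn_zero_iff)
  have sgn_W: "sgn (W i) = sgn (x i (rep i))" if "i < n" for i
    using diag_pos[OF that] unfolding W_def by (simp add: sgn_mult)
  have block_entry: "x i j = sgn (W i) * W j" if ij: "i < n" "j < n" and same: "rep i = rep j" for i j
  proof -
    define r where "r = rep i"
    have r: "r < n" "x i r \<noteq> 0" "x j r \<noteq> 0"
      using rep_less_nonzero[OF ij(1)] rep_less_nonzero[OF ij(2)] same unfolding r_def by auto
    have "sgn (x i j) = sgn (x i r) * sgn (x r j)"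
      using sgn_path[of i j r] nonzero_sym[of j r] r ij by blast
    also have "\<dots> = sgn (x i r) * sgn (x j r)" using sgn_sym r ij by simp
    finally have sgn_ij: "sgn (x i j) = sgn (x i r) * sgn (x j r)" .
    have abs_ij: "\<bar>x i j\<bar> = x j j"
      using abs_eq_on_edges[of i j j] rep_eq_iff ij same diag_pos[of j] by auto
    have "x i j = sgn (x i j) * \<bar>x i j\<bar>" by (simp add: sgn_mult_abs)
    also have "\<dots> = sgn (x i r) * (sgn (x j r) * x j j)" using sgn_ij abs_ij by simp
    also have "\<dots> = sgn (W i) * W j"
      using sgn_W[OF ij(1)] same unfolding r_def W_def[of j] by simp
    finally show ?thesis .
  qed
  show ?thesis
    by (intro exI[of _ rep] exI[of _ W]) (use W_nonzero block_entry rep_eq_iff in auto)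
qed

end

lemma f_IbM_index:
  assumes X: "X \<in> carrier_mat n n" and "i < n" "j < n"
  shows "f_IbM n X $$ (i,j) = inverse (\<Sum>k<n. \<bar>X $$ (i,k)\<bar>) * (\<Sum>k<n. X $$ (i,k) * X $$ (k,j))"
proof -
  define v where "v = map_vec inverse (abs_mat X *\<^sub>v vec n (\<lambda>_. 1))"
  have dim_v: "dim_vec v = n" using X unfolding v_def abs_mat_def by simp
  have v: "v $ i = inverse (\<Sum>k<n. \<bar>X $$ (i,k)\<bar>)"
    using X \<open>i < n\<close> unfolding v_def abs_mat_def by (simp add: scalar_prod_def atLeast0LessThan)
  have "f_IbM n X = mat n n (\<lambda>(i,j). v $ i * X $$ (i,j)) * X"
    using mat_diag_mult_left[OF X] dim_v unfolding f_IbM_def diag_of_vec_def v_def by simp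
  then have "f_IbM n X $$ (i,j) = (\<Sum>k<n. v $ i * X $$ (i,k) * X $$ (k,j))"
    using X assms by (simp add: scalar_prod_def atLeast0LessThan)
  then show ?thesis using v by (simp add: sum_distrib_left mult.assoc)
qed

lemma diag_of_vec_mult_index:
  assumes "X \<in> carrier_mat n n" "dim_vec g = n" "i < n" "j < n"
  shows "(diag_of_vec g * X) $$ (i,j) = g $ i * X $$ (i,j)"
  using mat_diag_mult_left[OF assms(1)] assms unfolding diag_of_vec_def by simp

text \<open>\<open>b i\<close> labels the diagonal block containing \<open>i\<close>, and \<open>W\<close> collects the vectors \<open>w\<close> of
  the blocks \<open>sign(w) w\<^sup>T\<close>.\<close>
definition signed_block_mat :: "nat \<Rightarrow> real mat \<Rightarrow> bool" where
  "signed_block_mat n X \<longleftrightarrow> X \<in> carrier_mat n n \<and>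
     (\<exists>(b :: nat \<Rightarrow> nat) W. (\<forall>i<n. W i \<noteq> 0) \<and>
        (\<forall>i<n. \<forall>j<n. X $$ (i,j) = (if b i = b j then sgn (W i) * W j else 0)))"

lemma fixed_point_imp_signed_block_mat:
  assumes XS: "X \<in> S_rs_symm n" and fixed: "f_IbM n X = X"
  shows "signed_block_mat n X"
proof -
  have X: "X \<in> carrier_mat n n" and diag: "\<forall>i<n. X $$ (i,i) > 0"
    using XS unfolding S_rs_symm_def by auto
  obtain \<gamma> where \<gamma>: "dim_vec \<gamma> = n" "\<forall>i<n. \<gamma> $ i > 0"
    and sym: "diag_of_vec \<gamma> * X = transpose_mat (diag_of_vec \<gamma> * X)"
    using XS unfolding S_rs_symm_def by auto
  interpret ibm_fixed_point n "\<lambda>i j. X $$ (i,j)" "\<lambda>i. \<gamma> $ i"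
  proof
    fix i k assume ik: "i < n" "k < n"
    have "\<gamma> $ i * X $$ (i,k) = (diag_of_vec \<gamma> * X) $$ (i,k)"
      using diag_of_vec_mult_index[OF X \<gamma>(1)] ik by simp
    also have "\<dots> = transpose_mat (diag_of_vec \<gamma> * X) $$ (i,k)" using sym by simp
    also have "\<dots> = (diag_of_vec \<gamma> * X) $$ (k,i)"
      using X ik \<gamma>(1) by (subst index_transpose_mat) (auto simp: diag_of_vec_def mat_diag_def)
    also have "\<dots> = \<gamma> $ k * X $$ (k,i)"
      using diag_of_vec_mult_index[OF X \<gamma>(1)] ik by simp
    finally show "\<gamma> $ i * X $$ (i,k) = \<gamma> $ k * X $$ (k,i)" .
  next
    fix i j assume ij: "i < n" "j < n"
    have "(\<Sum>k<n. \<bar>X $$ (i,k)\<bar>) > 0"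
      using member_le_sum[of i "{..<n}" "\<lambda>k. \<bar>X $$ (i,k)\<bar>"] diag ij by auto
    then show "(\<Sum>k<n. \<bar>X $$ (i,k)\<bar>) * X $$ (i,j) = (\<Sum>k<n. X $$ (i,k) * X $$ (k,j))"
      using f_IbM_index[OF X ij] fixed by (simp add: field_simps)
  qed (use \<gamma> diag in auto)
  show ?thesis using X signed_block_structure unfolding signed_block_mat_def by simp
qed

lemma signed_block_mat_imp_fixed_point:
  assumes "signed_block_mat n X"
  shows "f_IbM n X = X"
proof -
  obtain b :: "nat \<Rightarrow> nat" and W where X: "X \<in> carrier_mat n n" and W: "\<forall>i<n. W i \<noteq> 0"
    and entries: "\<forall>i<n. \<forall>j<n. X $$ (i,j) = (if b i = b j then sgn (W i) * W j else 0)"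
    using assms unfolding signed_block_mat_def by auto
  show ?thesis
  proof (rule eq_matI)
    fix i j assume "i < dim_row X" "j < dim_col X"
    then have ij: "i < n" "j < n" using X by auto
    have "X $$ (i,k) * X $$ (k,j) = X $$ (i,j) * \<bar>X $$ (i,k)\<bar>" if "k < n" for k
      using entries ij that by (auto simp: abs_mult sgn_mult algebra_simps abs_sgn)
    then have row: "(\<Sum>k<n. X $$ (i,k) * X $$ (k,j)) = X $$ (i,j) * (\<Sum>k<n. \<bar>X $$ (i,k)\<bar>)"
      by (simp add: sum_distrib_left)
    have "\<bar>X $$ (i,i)\<bar> > 0" using entries W ij by (simp add: abs_mult)
    then have "(\<Sum>k<n. \<bar>X $$ (i,k)\<bar>) > 0"
      using member_le_sum[of i "{..<n}" "\<lambda>k. \<bar>X $$ (i,k)\<bar>"] ij by auto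
    then show "f_IbM n X $$ (i,j) = X $$ (i,j)" using f_IbM_index[OF X ij] row by simp
  qed (use X in \<open>auto simp: f_IbM_def diag_of_vec_def abs_mat_def mat_diag_def\<close>)
qed

lemma social_balance_submatrix_sgn_outer:
  assumes V: "V \<subseteq> {..<dim_row X}" "V \<subseteq> {..<dim_col X}"
    and W: "\<And>i. i \<in> V \<Longrightarrow> W i \<noteq> 0"
    and entries: "\<And>i j. i \<in> V \<Longrightarrow> j \<in> V \<Longrightarrow> X $$ (i,j) = sgn (W i) * W j"
  shows "social_balance (submatrix X V V)"
proof -
  have rows: "{i. i < dim_row X \<and> i \<in> V} = V" and cols: "{j. j < dim_col X \<and> j \<in> V} = V"
    using V by auto
  have pick: "pick V a \<in> V" if "a < card V" for a
    using that by (intro pick_in_set) auto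
  have index: "submatrix X V V $$ (a,c) = sgn (W (pick V a)) * W (pick V c)"
    if "a < card V" "c < card V" for a c
    using submatrix_index[of a X V c V] rows cols that entries pick by simp
  have sgn_sq: "sgn (W i) * sgn (W i) = 1" if "i \<in> V" for i
    using W[OF that] by (auto simp: sgn_real_def)
  show ?thesis
    unfolding social_balance_def Let_def dim_submatrix rows
  proof (intro conjI allI impI)
    fix a assume "a < card V"
    then have "W (pick V a) \<noteq> 0" using pick W by blast
    then show "submatrix X V V $$ (a,a) > 0"
      using index \<open>a < card V\<close> by (simp add: sgn_real_def)
  next
    fix a c e assume ace: "a < card V" "c < card V" "e < card V"
    let ?s = "\<lambda>a. sgn (W (pick V a))"
    have "sgn (submatrix X V V $$ (a,c)) * sgn (submatrix X V V $$ (c,e)) * sgn (submatrix X V V $$ (e,a))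
        = (?s a * ?s a) * (?s c * ?s c) * (?s e * ?s e)"
      using ace index by (simp add: sgn_mult algebra_simps)
    also have "\<dots> = 1" using sgn_sq pick ace by simp
    finally show "sgn (submatrix X V V $$ (a,c)) * sgn (submatrix X V V $$ (c,e)) *
        sgn (submatrix X V V $$ (e,a)) = 1" .
  qed
qed

lemma signed_block_mat_balanced_partition:
  assumes "signed_block_mat n X"
  shows "\<exists>Vs. partition_on {..<n} Vs \<and>
           (\<forall>i<n. \<forall>j<n. (\<not> (\<exists>V\<in>Vs. i \<in> V \<and> j \<in> V)) \<longrightarrow> X $$ (i,j) = 0) \<and>
           (\<forall>V\<in>Vs. (\<forall>i\<in>V. \<forall>j\<in>V. X $$ (i,j) \<noteq> 0) \<and> social_balance (submatrix X V V))"
proof -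
  obtain b :: "nat \<Rightarrow> nat" and W where X: "X \<in> carrier_mat n n" and W: "\<forall>i<n. W i \<noteq> 0"
    and entries: "\<forall>i<n. \<forall>j<n. X $$ (i,j) = (if b i = b j then sgn (W i) * W j else 0)"
    using assms unfolding signed_block_mat_def by auto
  define block where "block i = {k. k < n \<and> b k = b i}" for i
  define Vs where "Vs = block ` {..<n}"
  have "partition_on {..<n} Vs"
    by (rule partition_onI) (auto simp: Vs_def block_def disjnt_def)
  moreover have "X $$ (i,j) = 0" if "i < n" "j < n" "\<not> (\<exists>V\<in>Vs. i \<in> V \<and> j \<in> V)" for i j
  proof -
    have "b i \<noteq> b j" using that unfolding Vs_def block_def by auto
    then show ?thesis using entries that by auto
  qed
  moreover have "(\<forall>i\<in>V. \<forall>j\<in>V. X $$ (i,j) \<noteq> 0) \<and> social_balance (submatrix X V V)"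
    if "V \<in> Vs" for V
  proof -
    obtain r where V: "V = block r" using \<open>V \<in> Vs\<close> unfolding Vs_def by auto
    have V_entries: "X $$ (i,j) = sgn (W i) * W j" if "i \<in> V" "j \<in> V" for i j
      using entries that unfolding V block_def by auto
    have "V \<subseteq> {..<n}" unfolding V block_def by auto
    then have "social_balance (submatrix X V V)"
      using X W V_entries by (intro social_balance_submatrix_sgn_outer) auto
    moreover have "X $$ (i,j) \<noteq> 0" if "i \<in> V" "j \<in> V" for i j
      using V_entries[OF that] W that \<open>V \<subseteq> {..<n}\<close> by (auto simp: sgn_zero_iff)
    ultimately show ?thesis by blast
  qed
  ultimately show ?thesis by blast
qed

lemma diag_block_mat_sign_outer_signed_block:
  assumes "\<forall>w\<in>set ws. \<forall>i<dim_vec w. w $ i \<noteq> 0"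
  shows "signed_block_mat (sum_list (map dim_vec ws)) (diag_block_mat (map sign_outer ws))"
  using assms
proof (induction ws)
  case Nil
  then show ?case unfolding signed_block_mat_def by auto
next
  case (Cons w ws)
  define N where "N = sum_list (map dim_vec ws)"
  define m where "m = dim_vec w"
  define B where "B = diag_block_mat (map sign_outer ws)"
  obtain b :: "nat \<Rightarrow> nat" and W where B: "B \<in> carrier_mat N N" and W: "\<forall>i<N. W i \<noteq> 0"
    and entries: "\<forall>i<N. \<forall>j<N. B $$ (i,j) = (if b i = b j then sgn (W i) * W j else 0)"
    using Cons unfolding signed_block_mat_def N_def B_def by auto
  have A: "sign_outer w \<in> carrier_mat m m" unfolding m_def sign_outer_def by auto
  have D: "diag_block_mat (map sign_outer (w # ws)) = four_block_mat (sign_outer w) (0\<^sub>m m N) (0\<^sub>m N m) B"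
    using A B unfolding B_def by (simp add: Let_def)
  define b' where "b' i = (if i < m then 0 else Suc (b (i - m)))" for i
  define W' where "W' i = (if i < m then w $ i else W (i - m))" for i
  have "\<forall>i<m + N. W' i \<noteq> 0" using W Cons.prems unfolding W'_def m_def by auto
  moreover have "\<forall>i<m + N. \<forall>j<m + N. four_block_mat (sign_outer w) (0\<^sub>m m N) (0\<^sub>m N m) B $$ (i,j) =
      (if b' i = b' j then sgn (W' i) * W' j else 0)"
    using A B entries unfolding b'_def W'_def by (auto simp: sign_outer_def m_def)
  moreover have "four_block_mat (sign_outer w) (0\<^sub>m m N) (0\<^sub>m N m) B \<in> carrier_mat (m + N) (m + N)"
    using A B by auto
  ultimately show ?case unfolding D signed_block_mat_def m_def N_def by auto
qed

lemma perm_matrix_conj_index: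
  assumes p: "p permutes {..<n}" and D: "D \<in> carrier_mat n n" and "i < n" "j < n"
  shows "(perm_matrix n p * D * transpose_mat (perm_matrix n p)) $$ (i,j) = D $$ (p i, p j)"
proof -
  have p_less: "p k < n" if "k < n" for k using permutes_in_image[OF p] that by auto
  have PD: "perm_matrix n p * D = mat n n (\<lambda>(i,k). D $$ (p i, k))"
  proof (rule eq_matI)
    fix a c assume "a < dim_row (mat n n (\<lambda>(i,k). D $$ (p i, k)))" "c < dim_col (mat n n (\<lambda>(i,k). D $$ (p i, k)))"
    then have ac: "a < n" "c < n" by auto
    have "(perm_matrix n p * D) $$ (a,c) = (\<Sum>l<n. (if p a = l then 1 else 0) * D $$ (l,c))"
      using ac D unfolding perm_matrix_def by (simp add: scalar_prod_def atLeast0LessThan)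
    also have "\<dots> = (\<Sum>l<n. if p a = l then D $$ (l,c) else 0)" by (intro sum.cong) auto
    also have "\<dots> = D $$ (p a, c)" using p_less[OF ac(1)] by (simp add: sum.delta)
    finally show "(perm_matrix n p * D) $$ (a,c) = mat n n (\<lambda>(i,k). D $$ (p i, k)) $$ (a,c)"
      using ac by simp
  qed (use D in \<open>auto simp: perm_matrix_def\<close>)
  have "(mat n n (\<lambda>(i,k). D $$ (p i, k)) * transpose_mat (perm_matrix n p)) $$ (i,j)
      = (\<Sum>l<n. D $$ (p i, l) * (if p j = l then 1 else 0))"
    using assms unfolding perm_matrix_def by (simp add: scalar_prod_def atLeast0LessThan)
  also have "\<dots> = (\<Sum>l<n. if p j = l then D $$ (p i, l) else 0)" by (intro sum.cong) auto
  also have "\<dots> = D $$ (p i, p j)" using p_less[OF \<open>j < n\<close>] by (simp add: sum.delta)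
  finally show ?thesis unfolding PD .
qed

lemma signed_block_mat_perm_conj:
  assumes p: "p permutes {..<n}" and "signed_block_mat n D"
  shows "signed_block_mat n (perm_matrix n p * D * transpose_mat (perm_matrix n p))"
proof -
  obtain b :: "nat \<Rightarrow> nat" and W where D: "D \<in> carrier_mat n n" and W: "\<forall>i<n. W i \<noteq> 0"
    and entries: "\<forall>i<n. \<forall>j<n. D $$ (i,j) = (if b i = b j then sgn (W i) * W j else 0)"
    using assms(2) unfolding signed_block_mat_def by auto
  have p_less: "p k < n" if "k < n" for k using permutes_in_image[OF p] that by auto
  have "perm_matrix n p * D * transpose_mat (perm_matrix n p) \<in> carrier_mat n n"
    using D unfolding perm_matrix_def by auto
  moreover have "\<forall>i<n. (W \<circ> p) i \<noteq> 0" using W p_less by auto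
  moreover have "\<forall>i<n. \<forall>j<n. (perm_matrix n p * D * transpose_mat (perm_matrix n p)) $$ (i,j)
      = (if (b \<circ> p) i = (b \<circ> p) j then sgn ((W \<circ> p) i) * (W \<circ> p) j else 0)"
    using perm_matrix_conj_index[OF p D] entries p_less by auto
  ultimately show ?thesis unfolding signed_block_mat_def by blast
qed

lemma Q_IbM_imp_signed_block_mat:
  assumes "X \<in> Q_IbM n"
  shows "signed_block_mat n X"
proof -
  obtain p ws where p: "p permutes {..<n}"
    and ws: "\<forall>w\<in>set ws. dim_vec w \<le> n \<and> (\<forall>i<dim_vec w. \<bar>w $ i\<bar> > 0)"
    and n: "sum_list (map dim_vec ws) = n"
    and X: "X = perm_matrix n p * diag_block_mat (map sign_outer ws) * transpose_mat (perm_matrix n p)"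
    using assms unfolding Q_IbM_def by blast
  have "signed_block_mat n (diag_block_mat (map sign_outer ws))"
    using diag_block_mat_sign_outer_signed_block[of ws] ws n by auto
  then show ?thesis unfolding X by (rule signed_block_mat_perm_conj[OF p])
qed

lemma diag_block_mat_sign_outer_grouped:
  fixes b :: "nat \<Rightarrow> 'b" and W :: "nat \<Rightarrow> real"
  assumes "distinct vs" and "\<forall>v\<in>set vs. \<forall>u\<in>set (cls v). b u = v"
  shows "diag_block_mat (map (\<lambda>v. sign_outer (vec_of_list (map W (cls v)))) vs)
      \<in> carrier_mat (length (concat (map cls vs))) (length (concat (map cls vs))) \<and>
    (\<forall>a<length (concat (map cls vs)). \<forall>c<length (concat (map cls vs)).
      diag_block_mat (map (\<lambda>v. sign_outer (vec_of_list (map W (cls v)))) vs) $$ (a,c) =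
        (if b (concat (map cls vs) ! a) = b (concat (map cls vs) ! c)
         then sgn (W (concat (map cls vs) ! a)) * W (concat (map cls vs) ! c) else 0))"
  using assms
proof (induction vs)
  case Nil
  then show ?case by simp
next
  case (Cons v vs)
  define C where "C = cls v"
  define m where "m = length C"
  define ord where "ord = concat (map cls vs)"
  define A where "A = sign_outer (vec_of_list (map W C))"
  define B where "B = diag_block_mat (map (\<lambda>v. sign_outer (vec_of_list (map W (cls v)))) vs)"
  have B: "B \<in> carrier_mat (length ord) (length ord)"
    and B_entries: "\<forall>a<length ord. \<forall>c<length ord. B $$ (a,c) =
      (if b (ord ! a) = b (ord ! c) then sgn (W (ord ! a)) * W (ord ! c) else 0)"
    using Cons unfolding B_def ord_def by auto
  have A: "A \<in> carrier_mat m m" unfolding A_def m_def sign_outer_def by auto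
  have b_C: "b (C ! k) = v" if "k < m" for k
    using Cons.prems that unfolding C_def m_def by auto
  have b_ord: "b (ord ! k) \<noteq> v" if k: "k < length ord" for k
  proof -
    obtain v' where "v' \<in> set vs" "ord ! k \<in> set (cls v')"
      using nth_mem[OF k] unfolding ord_def by auto
    then show ?thesis using Cons.prems by auto
  qed
  have D: "diag_block_mat (map (\<lambda>v. sign_outer (vec_of_list (map W (cls v)))) (v # vs))
     = four_block_mat A (0\<^sub>m m (length ord)) (0\<^sub>m (length ord) m) B"
    using A B unfolding A_def B_def C_def by (simp add: Let_def)
  have "four_block_mat A (0\<^sub>m m (length ord)) (0\<^sub>m (length ord) m) B $$ (a,c) =
      (if b ((C @ ord) ! a) = b ((C @ ord) ! c) then sgn (W ((C @ ord) ! a)) * W ((C @ ord) ! c) else 0)"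
    if ac: "a < m + length ord" "c < m + length ord" for a c
  proof -
    have "\<not> a < m \<Longrightarrow> b (ord ! (a - m)) \<noteq> v" "\<not> c < m \<Longrightarrow> b (ord ! (c - m)) \<noteq> v"
      using ac by (auto intro!: b_ord)
    then show ?thesis
      using ac A B B_entries b_C[of a] b_C[of c]
      by (cases "a < m"; cases "c < m") (auto simp: nth_append A_def sign_outer_def vec_of_list_index m_def)
  qed
  moreover have "concat (map cls (v # vs)) = C @ ord" unfolding C_def ord_def by simp
  ultimately show ?case unfolding D using A B by (auto simp: m_def)
qed

lemma permutes_nth_inverse:
  assumes "distinct xs" "set xs = {..<n}"
  shows "\<exists>p. p permutes {..<n} \<and> (\<forall>i<n. xs ! p i = i)"
proof -
  have len: "length xs = n" using assms distinct_card[of xs] by auto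
  define q where "q a = (if a < n then xs ! a else a)" for a
  have "bij_betw ((!) xs) {..<n} {..<n}"
    using assms len by (intro bij_betw_nth) auto
  then have "bij_betw q {..<n} {..<n}"
    by (rule bij_betw_cong[THEN iffD1, rotated]) (auto simp: q_def)
  then have q: "q permutes {..<n}" by (rule bij_imp_permutes) (auto simp: q_def)
  define p where "p = inv_into UNIV q"
  have p: "p permutes {..<n}" unfolding p_def by (rule permutes_inv[OF q])
  have "xs ! p i = i" if "i < n" for i
    using permutes_inverses(1)[OF q, of i] permutes_in_image[OF p, of i] that
    unfolding q_def p_def by auto
  then show ?thesis using p by blast
qed

lemma label_classes_enumerate:
  fixes b :: "nat \<Rightarrow> 'b" and n :: nat
  defines "cls \<equiv> \<lambda>v. filter (\<lambda>k. b k = v) [0..<n]"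
  shows "distinct (concat (map cls (remdups (map b [0..<n]))))"
    and "set (concat (map cls (remdups (map b [0..<n])))) = {..<n}"
proof -
  have "inj_on cls (set (remdups (map b [0..<n])))"
  proof (rule inj_onI)
    fix v v' assume "v \<in> set (remdups (map b [0..<n]))" and same: "cls v = cls v'"
    then obtain i where "i \<in> set (cls v)" "b i = v" by (auto simp: cls_def)
    then show "v = v'" unfolding same by (simp add: cls_def)
  qed
  then show "distinct (concat (map cls (remdups (map b [0..<n]))))"
    by (intro distinct_concat) (auto simp: distinct_map cls_def)
  show "set (concat (map cls (remdups (map b [0..<n])))) = {..<n}" by (auto simp: cls_def)
qed

lemma signed_block_mat_imp_Q_IbM:
  assumes XS: "X \<in> S_rs_symm n" and "signed_block_mat n X"
  shows "X \<in> Q_IbM n"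
proof -
  obtain b :: "nat \<Rightarrow> nat" and W where X: "X \<in> carrier_mat n n" and W: "\<forall>i<n. W i \<noteq> 0"
    and entries: "\<forall>i<n. \<forall>j<n. X $$ (i,j) = (if b i = b j then sgn (W i) * W j else 0)"
    using assms(2) unfolding signed_block_mat_def by auto
  define vs where "vs = remdups (map b [0..<n])"
  define cls where "cls = (\<lambda>v. filter (\<lambda>k. b k = v) [0..<n])"
  define ord where "ord = concat (map cls vs)"
  define ws where "ws = map (\<lambda>v. vec_of_list (map W (cls v))) vs"
  define D where "D = diag_block_mat (map sign_outer ws)"
  have grouped: "D \<in> carrier_mat (length ord) (length ord) \<and>
      (\<forall>a<length ord. \<forall>c<length ord. D $$ (a,c) =
        (if b (ord ! a) = b (ord ! c) then sgn (W (ord ! a)) * W (ord ! c) else 0))"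
    unfolding D_def ws_def ord_def map_map o_def
    by (rule diag_block_mat_sign_outer_grouped) (auto simp: vs_def cls_def)
  have distinct: "distinct ord" and set: "set ord = {..<n}"
    using label_classes_enumerate[of b n] unfolding ord_def vs_def cls_def by simp_all
  have len: "length ord = n" using distinct set distinct_card[of ord] by auto
  have D: "D \<in> carrier_mat n n"
    and D_entries: "\<forall>a<n. \<forall>c<n. D $$ (a,c) =
      (if b (ord ! a) = b (ord ! c) then sgn (W (ord ! a)) * W (ord ! c) else 0)"
    using grouped unfolding len by auto
  obtain p where p: "p permutes {..<n}" and ord_p: "\<forall>i<n. ord ! p i = i"
    using permutes_nth_inverse[OF distinct set] by blast
  have p_less: "p k < n" if "k < n" for k using permutes_in_image[OF p] that by auto
  have X_eq: "X = perm_matrix n p * D * transpose_mat (perm_matrix n p)"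
  proof (rule eq_matI)
    fix i j assume "i < dim_row (perm_matrix n p * D * transpose_mat (perm_matrix n p))"
      "j < dim_col (perm_matrix n p * D * transpose_mat (perm_matrix n p))"
    then have ij: "i < n" "j < n" unfolding perm_matrix_def by auto
    then show "X $$ (i,j) = (perm_matrix n p * D * transpose_mat (perm_matrix n p)) $$ (i,j)"
      using perm_matrix_conj_index[OF p D ij] D_entries p_less ord_p entries by auto
  qed (use X in \<open>auto simp: perm_matrix_def\<close>)
  have sum_dim: "sum_list (map dim_vec ws) = n"
    using len unfolding ws_def ord_def by (simp add: length_concat o_def)
  have ws: "\<forall>w\<in>set ws. dim_vec w \<le> n \<and> (\<forall>i<dim_vec w. \<bar>w $ i\<bar> > 0)"
  proof
    fix w assume "w \<in> set ws"
    then obtain v where w: "w = vec_of_list (map W (cls v))" unfolding ws_def by auto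
    have "length (cls v) \<le> n" using length_filter_le[of _ "[0..<n]"] unfolding cls_def by simp
    moreover have "W (cls v ! i) \<noteq> 0" if "i < length (cls v)" for i
      using nth_mem[OF that] W unfolding cls_def by auto
    ultimately show "dim_vec w \<le> n \<and> (\<forall>i<dim_vec w. \<bar>w $ i\<bar> > 0)"
      unfolding w by (simp add: vec_of_list_index)
  qed
  show ?thesis
    unfolding Q_IbM_def
    by (intro CollectI conjI exI[of _ p] exI[of _ ws] XS p ws sum_dim X_eq[unfolded D_def])
qed

theorem theorem4p4:
  fixes n :: nat
  shows "Q_IbM n = {X \<in> S_rs_symm n. f_IbM n X = X} \<and>
    (\<forall>X\<in>Q_IbM n. \<exists>Vs. partition_on {..<n} Vs \<and>
           (\<forall>i<n. \<forall>j<n. (\<not> (\<exists>V\<in>Vs. i \<in> V \<and> j \<in> V)) \<longrightarrow> X $$ (i,j) = 0) \<and>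
           (\<forall>V\<in>Vs. (\<forall>i\<in>V. \<forall>j\<in>V. X $$ (i,j) \<noteq> 0) \<and>
                    social_balance (submatrix X V V)))"
proof (intro conjI ballI)
  have "X \<in> Q_IbM n \<longleftrightarrow> X \<in> S_rs_symm n \<and> f_IbM n X = X" for X
  proof
    assume "X \<in> Q_IbM n"
    moreover from this have "X \<in> S_rs_symm n" unfolding Q_IbM_def by blast
    ultimately show "X \<in> S_rs_symm n \<and> f_IbM n X = X"
      using Q_IbM_imp_signed_block_mat signed_block_mat_imp_fixed_point by blast
  qed (use fixed_point_imp_signed_block_mat signed_block_mat_imp_Q_IbM in blast)
  then show "Q_IbM n = {X \<in> S_rs_symm n. f_IbM n X = X}" by blast
next
  fix X assume "X \<in> Q_IbM n"
  then show "\<exists>Vs. partition_on {..<n} Vs \<and>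
           (\<forall>i<n. \<forall>j<n. (\<not> (\<exists>V\<in>Vs. i \<in> V \<and> j \<in> V)) \<longrightarrow> X $$ (i,j) = 0) \<and>
           (\<forall>V\<in>Vs. (\<forall>i\<in>V. \<forall>j\<in>V. X $$ (i,j) \<noteq> 0) \<and> social_balance (submatrix X V V))"
    by (intro signed_block_mat_balanced_partition Q_IbM_imp_signed_block_mat)
qed

end
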